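(* Let $p(z)=z^n+a_nz^{n-1}+\cdots+a_2z+a_1$ be a complex monic polynomial with $n\geq2$ and $a_1\neq0$, with Frobenius companion matrix $C_p$. Then $$r(C_p)\leq\left\{\frac{1}{4}\left(\frac{\delta+1+\sqrt{(\delta-1)^2+4\delta'}}{2}\right)+\frac{3}{4}\left(\frac{1}{2}\left(\delta_1+\delta+\sqrt{(\delta_1-\delta)^2+4\delta_2}\right)+1\right)^{1/2}\right\}^{1/4}.$$
   Context: $r(\cdot)$ is the spectral radius. The Frobenius companion matrix of $p$ is the $n\times n$ matrix $C_p$ whose first row is $(-a_n,-a_{n-1},\dots,-a_2,-a_1)$, whose entries $(k+1,k)$ equal $1$ for $k=1,\dots,n-1$, and whose other entries are $0$. Define numbers $b_j,c_j,d_j$ ($j=1,\dots,n$) by: the first row of $C_p^2$ is $(b_n,b_{n-1},\dots,b_1)$, the first row of $C_p^3$ is $(c_n,\dots,c_1)$, the first row of $C_p^4$ is $(d_n,\dots,d_1)$ (so $b_j=a_na_j-a_{j-1}$, $c_j=-a_nb_j+a_{n-1}a_j-a_{j-2}$ with $a_0=a_{-1}=0$). Set $\alpha=\sum_{j=1}^n|a_j|^2$, $\beta=\sum_{j=1}^n|b_j|^2$, $\gamma=-\sum_{j=1}^n b_j\overline{a_j}$, $\delta=\frac{1}{2}\left(\alpha+\beta+\sqrt{(\alpha-\beta)^2+4|\gamma|^2}\right)$; $\alpha'=\sum_{j=3}^n|a_j|^2$, $\beta'=\sum_{j=3}^n|b_j|^2$, $\gamma'=-\sum_{j=3}^n\overline{a_j}b_j$,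 $\delta'=\frac12\left(\alpha'+\beta'+\sqrt{(\alpha'-\beta')^2+4|\gamma'|^2}\right)$; $\alpha_1=\sum_{j=1}^n|d_j|^2$, $\beta_1=\sum_{j=1}^n|c_j|^2$, $\gamma_1=\sum_{j=1}^n d_j\overline{c_j}$, $\delta_1=\frac12\left(\alpha_1+\beta_1+\sqrt{(\alpha_1-\beta_1)^2+4|\gamma_1|^2}\right)$; $\gamma_2=\sum_{j=1}^n d_j\overline{b_j}$, $\gamma_3=\sum_{j=1}^n d_j\overline{a_j}$, $\gamma_4=\sum_{j=1}^n c_j\overline{b_j}$, $\gamma_5=\sum_{j=1}^n c_j\overline{a_j}$, and $\delta_2=\frac12\Big(|\gamma_2|^2+|\gamma_3|^2+|\gamma_4|^2+|\gamma_5|^2+\sqrt{\big((|\gamma_2|^2+|\gamma_3|^2)-(|\gamma_4|^2+|\gamma_5|^2)\big)^2+4|\gamma_2\overline{\gamma_4}+\gamma_3\overline{\gamma_5}|^2}\Big)$. *)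

theory Defs
  imports "Jordan_Normal_Form.Spectral_Radius"
begin

text \<open>Coefficients: p(z) = z^n + a n z^(n-1) + ... + a 2 z + a 1, given by a :: nat => complex
  (only a 1, ..., a n are used). Matrices are 0-indexed: row i, column j of the paper
  correspond to index (i-1, j-1).\<close>

definition companion :: "nat \<Rightarrow> (nat \<Rightarrow> complex) \<Rightarrow> complex mat" where
  "companion n a = mat n n (\<lambda>(i, j).
     if i = 0 then - a (n - j)
     else if i = j + 1 then 1 else 0)"

text \<open>First row of C_p^k is (e_n, ..., e_1), so e_j is entry (0, n-j) (0-indexed).\<close>
definition firstrow :: "nat \<Rightarrow> (nat \<Rightarrow> complex) \<Rightarrow> nat \<Rightarrow> nat \<Rightarrow> complex" where
  "firstrow n a k j = (companion n a ^\<^sub>m k) $$ (0, n - j)"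

definition bco :: "nat \<Rightarrow> (nat \<Rightarrow> complex) \<Rightarrow> nat \<Rightarrow> complex" where
  "bco n a = firstrow n a 2"
definition cco :: "nat \<Rightarrow> (nat \<Rightarrow> complex) \<Rightarrow> nat \<Rightarrow> complex" where
  "cco n a = firstrow n a 3"
definition dco :: "nat \<Rightarrow> (nat \<Rightarrow> complex) \<Rightarrow> nat \<Rightarrow> complex" where
  "dco n a = firstrow n a 4"

definition alpha :: "nat \<Rightarrow> (nat \<Rightarrow> complex) \<Rightarrow> real" where
  "alpha n a = (\<Sum>j=1..n. (cmod (a j))\<^sup>2)"
definition beta :: "nat \<Rightarrow> (nat \<Rightarrow> complex) \<Rightarrow> real" where
  "beta n a = (\<Sum>j=1..n. (cmod (bco n a j))\<^sup>2)"
definition gamma :: "nat \<Rightarrow> (nat \<Rightarrow> complex) \<Rightarrow> complex" where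
  "gamma n a = - (\<Sum>j=1..n. bco n a j * cnj (a j))"
definition delta :: "nat \<Rightarrow> (nat \<Rightarrow> complex) \<Rightarrow> real" where
  "delta n a = (alpha n a + beta n a
     + sqrt ((alpha n a - beta n a)\<^sup>2 + 4 * (cmod (gamma n a))\<^sup>2)) / 2"

definition alpha' :: "nat \<Rightarrow> (nat \<Rightarrow> complex) \<Rightarrow> real" where
  "alpha' n a = (\<Sum>j=3..n. (cmod (a j))\<^sup>2)"
definition beta' :: "nat \<Rightarrow> (nat \<Rightarrow> complex) \<Rightarrow> real" where
  "beta' n a = (\<Sum>j=3..n. (cmod (bco n a j))\<^sup>2)"
definition gamma' :: "nat \<Rightarrow> (nat \<Rightarrow> complex) \<Rightarrow> complex" where
  "gamma' n a = - (\<Sum>j=3..n. cnj (a j) * bco n a j)"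
definition delta' :: "nat \<Rightarrow> (nat \<Rightarrow> complex) \<Rightarrow> real" where
  "delta' n a = (alpha' n a + beta' n a
     + sqrt ((alpha' n a - beta' n a)\<^sup>2 + 4 * (cmod (gamma' n a))\<^sup>2)) / 2"

definition alpha1 :: "nat \<Rightarrow> (nat \<Rightarrow> complex) \<Rightarrow> real" where
  "alpha1 n a = (\<Sum>j=1..n. (cmod (dco n a j))\<^sup>2)"
definition beta1 :: "nat \<Rightarrow> (nat \<Rightarrow> complex) \<Rightarrow> real" where
  "beta1 n a = (\<Sum>j=1..n. (cmod (cco n a j))\<^sup>2)"
definition gamma1 :: "nat \<Rightarrow> (nat \<Rightarrow> complex) \<Rightarrow> complex" where
  "gamma1 n a = (\<Sum>j=1..n. dco n a j * cnj (cco n a j))"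
definition delta1 :: "nat \<Rightarrow> (nat \<Rightarrow> complex) \<Rightarrow> real" where
  "delta1 n a = (alpha1 n a + beta1 n a
     + sqrt ((alpha1 n a - beta1 n a)\<^sup>2 + 4 * (cmod (gamma1 n a))\<^sup>2)) / 2"

definition gamma2 :: "nat \<Rightarrow> (nat \<Rightarrow> complex) \<Rightarrow> complex" where
  "gamma2 n a = (\<Sum>j=1..n. dco n a j * cnj (bco n a j))"
definition gamma3 :: "nat \<Rightarrow> (nat \<Rightarrow> complex) \<Rightarrow> complex" where
  "gamma3 n a = (\<Sum>j=1..n. dco n a j * cnj (a j))"
definition gamma4 :: "nat \<Rightarrow> (nat \<Rightarrow> complex) \<Rightarrow> complex" where
  "gamma4 n a = (\<Sum>j=1..n. cco n a j * cnj (bco n a j))"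
definition gamma5 :: "nat \<Rightarrow> (nat \<Rightarrow> complex) \<Rightarrow> complex" where
  "gamma5 n a = (\<Sum>j=1..n. cco n a j * cnj (a j))"

definition delta2 :: "nat \<Rightarrow> (nat \<Rightarrow> complex) \<Rightarrow> real" where
  "delta2 n a =
    (let g2 = (cmod (gamma2 n a))\<^sup>2; g3 = (cmod (gamma3 n a))\<^sup>2;
         g4 = (cmod (gamma4 n a))\<^sup>2; g5 = (cmod (gamma5 n a))\<^sup>2
     in (g2 + g3 + g4 + g5
         + sqrt (((g2 + g3) - (g4 + g5))\<^sup>2
                 + 4 * (cmod (gamma2 n a * cnj (gamma4 n a) + gamma3 n a * cnj (gamma5 n a)))\<^sup>2)) / 2)"

end

theory Submission
  imports Defs "HOL-Analysis.L2_Norm"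
begin

(* Take an eigenvalue \<lambda> with |\<lambda>| = r(C_p) and a left eigenvector v, so v\<^sup>T C_p^k = \<lambda>^k v\<^sup>T.
   Row i of C_p^k is row 0 of C_p^(k-i) for i < k and the unit row e_(i-k) otherwise, hence
     \<lambda>^k v\<^sup>T = v_0 (row 0 of C_p^k) + ... + v_(k-1) (row 0 of C_p) + (v_k, ..., v_(n-1), 0, ..., 0).
   For k = 2 the head is (v_0, v_1) applied to the rows b and a; its squared norm is at most \<delta> |(v_0, v_1)|^2,
   and it meets the shifted tail only in its first n - 2 entries, which brings in \<delta>'.  Bounding the
   resulting quadratic form in (|(v_0, v_1)|, |tail|) gives r^4 \<le> \<lambda>_max [[\<delta>, \<surd>\<delta>'], [\<surd>\<delta>', 1]].
   For k = 4 the rows d, c and b, a form two blocks with Gram eigenvalues \<delta>_1 and \<delta>, coupled through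
   the 2 \<times> 2 matrix of their inner products, whose squared norm is \<delta>_2; this gives
   r^8 \<le> \<lambda>_max [[\<delta>_1, \<surd>\<delta>_2], [\<surd>\<delta>_2, \<delta>]] + 1.  The theorem is a weighted mean of the two bounds. *)

(* Largest eigenvalue of the Hermitian matrix [[p, c], [cnj c, r]] with |c| = q. *)
definition lambda_max2 :: "real \<Rightarrow> real \<Rightarrow> real \<Rightarrow> real" where
  "lambda_max2 p r q = (p + r + sqrt ((p - r)\<^sup>2 + 4 * q\<^sup>2)) / 2"

lemma lambda_max2_ge: "p \<le> lambda_max2 p r q" "r \<le> lambda_max2 p r q"
proof -
  have "\<bar>p - r\<bar> \<le> sqrt ((p - r)\<^sup>2 + 4 * q\<^sup>2)"
    using real_sqrt_le_mono[of "(p - r)\<^sup>2" "(p - r)\<^sup>2 + 4 * q\<^sup>2"] by simp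
  then show "p \<le> lambda_max2 p r q" "r \<le> lambda_max2 p r q"
    unfolding lambda_max2_def by (auto simp: abs_le_iff)
qed

lemma lambda_max2_sqrt: "0 \<le> y \<Longrightarrow> lambda_max2 y 1 (sqrt y) = y + 1"
proof -
  assume "0 \<le> y"
  then have "(y - 1)\<^sup>2 + 4 * (sqrt y)\<^sup>2 = (y + 1)\<^sup>2" by (simp add: power2_eq_square algebra_simps)
  then show ?thesis using \<open>0 \<le> y\<close> unfolding lambda_max2_def by simp
qed

lemma quadratic_form_le_lambda_max2:
  fixes p r q s t :: real
  assumes "0 \<le> q"
  shows "p * s\<^sup>2 + r * t\<^sup>2 + 2 * q * s * t \<le> lambda_max2 p r q * (s\<^sup>2 + t\<^sup>2)"
proof -
  define L where "L = lambda_max2 p r q"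
  define D where "D = sqrt ((p - r)\<^sup>2 + 4 * q\<^sup>2)"
  have "D\<^sup>2 = (p - r)\<^sup>2 + 4 * q\<^sup>2" unfolding D_def by simp
  then have "(L - p) * (L - r) = q\<^sup>2"
    unfolding L_def lambda_max2_def D_def[symmetric] by (simp add: field_simps power2_eq_square)
  moreover have "0 \<le> L - p" "0 \<le> L - r" using lambda_max2_ge unfolding L_def by auto
  \<comment> \<open>the excess is the square of \<open>sqrt (L - p) * s - sqrt (L - r) * t\<close>\<close>
  ultimately have "2 * (q * s * t) \<le> (L - p) * s\<^sup>2 + (L - r) * t\<^sup>2"
    using sum_squares_bound[of "sqrt (L - p) * s" "sqrt (L - r) * t"] \<open>0 \<le> q\<close>
    by (simp add: power_mult_distrib real_sqrt_mult[symmetric] mult_ac)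
  then show ?thesis unfolding L_def[symmetric] by (simp add: algebra_simps)
qed

lemma cmod_add_sq: "(cmod (x + y))\<^sup>2 = (cmod x)\<^sup>2 + (cmod y)\<^sup>2 + 2 * Re (x * cnj y)"
  unfolding cmod_power2 by (simp add: algebra_simps power2_eq_square)

lemma cmod_sum_mult_cnj_le:
  "cmod (\<Sum>j\<in>S. x j * cnj (y j)) \<le> sqrt (\<Sum>j\<in>S. (cmod (x j))\<^sup>2) * sqrt (\<Sum>j\<in>S. (cmod (y j))\<^sup>2)"
proof -
  have "cmod (\<Sum>j\<in>S. x j * cnj (y j)) \<le> (\<Sum>j\<in>S. \<bar>cmod (x j)\<bar> * \<bar>cmod (y j)\<bar>)"
    using norm_sum[of "\<lambda>j. x j * cnj (y j)" S] by (simp add: norm_mult)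
  also have "\<dots> \<le> L2_set (\<lambda>j. cmod (x j)) S * L2_set (\<lambda>j. cmod (y j)) S"
    by (rule L2_set_mult_ineq)
  finally show ?thesis unfolding L2_set_def by simp
qed

lemma sum_cmod_add_sq_le_lambda_max2:
  fixes x y :: "'i \<Rightarrow> complex"
  assumes "(\<Sum>j\<in>S. (cmod (x j))\<^sup>2) \<le> p * s" and "(\<Sum>j\<in>S. (cmod (y j))\<^sup>2) \<le> r * t"
    and "Re (\<Sum>j\<in>S. x j * cnj (y j)) \<le> q * sqrt s * sqrt t"
    and "0 \<le> q" "0 \<le> s" "0 \<le> t"
  shows "(\<Sum>j\<in>S. (cmod (x j + y j))\<^sup>2) \<le> lambda_max2 p r q * (s + t)"
proof -
  have "(\<Sum>j\<in>S. (cmod (x j + y j))\<^sup>2)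
      = (\<Sum>j\<in>S. (cmod (x j))\<^sup>2) + (\<Sum>j\<in>S. (cmod (y j))\<^sup>2) + 2 * Re (\<Sum>j\<in>S. x j * cnj (y j))"
    by (simp add: cmod_add_sq sum.distrib sum_distrib_left Re_sum)
  also have "\<dots> \<le> p * (sqrt s)\<^sup>2 + r * (sqrt t)\<^sup>2 + 2 * q * sqrt s * sqrt t"
    using assms by simp
  also have "\<dots> \<le> lambda_max2 p r q * ((sqrt s)\<^sup>2 + (sqrt t)\<^sup>2)"
    using quadratic_form_le_lambda_max2 \<open>0 \<le> q\<close> .
  finally show ?thesis using assms by simp
qed

(* The squared norm of the map (u, w) \<mapsto> u x + w y on \<complex>\<^sup>2. *)
definition gram_lambda_max :: "'i set \<Rightarrow> ('i \<Rightarrow> complex) \<Rightarrow> ('i \<Rightarrow> complex) \<Rightarrow> real" where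
  "gram_lambda_max S x y = lambda_max2 (\<Sum>j\<in>S. (cmod (x j))\<^sup>2) (\<Sum>j\<in>S. (cmod (y j))\<^sup>2)
     (cmod (\<Sum>j\<in>S. x j * cnj (y j)))"

lemma gram_lambda_max_nonneg: "0 \<le> gram_lambda_max S x y"
  unfolding gram_lambda_max_def
  by (rule order_trans[OF sum_nonneg lambda_max2_ge(1)]) simp

lemma sum_cmod_lin_comb_sq_le:
  "(\<Sum>j\<in>S. (cmod (u * x j + w * y j))\<^sup>2) \<le> gram_lambda_max S x y * ((cmod u)\<^sup>2 + (cmod w)\<^sup>2)"
proof -
  have "Re (\<Sum>j\<in>S. u * x j * cnj (w * y j)) \<le> cmod (u * cnj w * (\<Sum>j\<in>S. x j * cnj (y j)))"
    by (rule order_trans[OF _ complex_Re_le_cmod]) (simp add: sum_distrib_left mult_ac)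
  then show ?thesis unfolding gram_lambda_max_def
    by (intro sum_cmod_add_sq_le_lambda_max2)
      (auto simp: norm_mult power_mult_distrib sum_distrib_left[symmetric] mult_ac)
qed

lemma sum_cmod_block_lin_comb_sq_le:
  fixes S :: "'i set" and x y :: "nat \<Rightarrow> 'i \<Rightarrow> complex" and u w :: "nat \<Rightarrow> complex"
  defines "G \<equiv> gram_lambda_max {..<2} (\<lambda>i. \<Sum>j\<in>S. x 0 j * cnj (y i j)) (\<lambda>i. \<Sum>j\<in>S. x 1 j * cnj (y i j))"
  shows "(\<Sum>j\<in>S. (cmod (u 0 * x 0 j + u 1 * x 1 j + (w 0 * y 0 j + w 1 * y 1 j)))\<^sup>2)
    \<le> lambda_max2 (gram_lambda_max S (x 0) (x 1)) (gram_lambda_max S (y 0) (y 1)) (sqrt G)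
      * ((\<Sum>i<2. (cmod (u i))\<^sup>2) + (\<Sum>i<2. (cmod (w i))\<^sup>2))"
proof (rule sum_cmod_add_sq_le_lambda_max2)
  define X where "X i = u 0 * (\<Sum>j\<in>S. x 0 j * cnj (y i j)) + u 1 * (\<Sum>j\<in>S. x 1 j * cnj (y i j))" for i
  have norm2: "(\<Sum>i<2. (cmod (f i))\<^sup>2) = (cmod (f 0))\<^sup>2 + (cmod (f 1))\<^sup>2" for f :: "nat \<Rightarrow> complex"
    by (simp add: numeral_2_eq_2)
  \<comment> \<open>the cross term factors through the \<open>2 \<times> 2\<close> matrix of inner products \<open>\<langle>x\<^sub>k, y\<^sub>i\<rangle>\<close>\<close>
  have "(\<Sum>j\<in>S. (u 0 * x 0 j + u 1 * x 1 j) * cnj (w 0 * y 0 j + w 1 * y 1 j)) = (\<Sum>i<2. X i * cnj (w i))"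
    by (simp add: X_def numeral_2_eq_2 algebra_simps sum.distrib sum_distrib_left)
  also have "cmod \<dots> \<le> sqrt (\<Sum>i<2. (cmod (X i))\<^sup>2) * sqrt (\<Sum>i<2. (cmod (w i))\<^sup>2)"
    by (rule cmod_sum_mult_cnj_le)
  also have "\<dots> \<le> sqrt (G * (\<Sum>i<2. (cmod (u i))\<^sup>2)) * sqrt (\<Sum>i<2. (cmod (w i))\<^sup>2)"
    unfolding X_def G_def norm2[of u]
    by (intro mult_right_mono real_sqrt_le_mono sum_cmod_lin_comb_sq_le real_sqrt_ge_zero sum_nonneg) simp_all
  finally show "Re (\<Sum>j\<in>S. (u 0 * x 0 j + u 1 * x 1 j) * cnj (w 0 * y 0 j + w 1 * y 1 j))
      \<le> sqrt G * sqrt (\<Sum>i<2. (cmod (u i))\<^sup>2) * sqrt (\<Sum>i<2. (cmod (w i))\<^sup>2)"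
    using complex_Re_le_cmod by (smt (verit) real_sqrt_mult)
  show "(\<Sum>j\<in>S. (cmod (u 0 * x 0 j + u 1 * x 1 j))\<^sup>2)
      \<le> gram_lambda_max S (x 0) (x 1) * (\<Sum>i<2. (cmod (u i))\<^sup>2)"
    using sum_cmod_lin_comb_sq_le[where u = "u 0" and x = "x 0" and w = "u 1" and y = "x 1"]
    by (simp only: norm2)
  show "(\<Sum>j\<in>S. (cmod (w 0 * y 0 j + w 1 * y 1 j))\<^sup>2)
      \<le> gram_lambda_max S (y 0) (y 1) * (\<Sum>i<2. (cmod (w i))\<^sup>2)"
    using sum_cmod_lin_comb_sq_le[where u = "w 0" and x = "y 0" and w = "w 1" and y = "y 1"]
    by (simp only: norm2)
qed (simp_all add: sum_nonneg G_def gram_lambda_max_nonneg)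

lemma sum_lessThan_add_split:
  fixes f :: "nat \<Rightarrow> 'a::comm_monoid_add"
  shows "(\<Sum>i<k + n. f i) = (\<Sum>i<k. f i) + (\<Sum>j<n. f (j + k))"
  by (induction n) (auto simp: add_ac)

lemma sum_atLeastAtMost_reflect:
  fixes f :: "nat \<Rightarrow> 'a::comm_monoid_add"
  shows "(\<Sum>j=m..n. f j) = (\<Sum>c<Suc n - m. f (n - c))"
  by (rule sum.reindex_bij_witness[of _ "\<lambda>j. n - j" "\<lambda>j. n - j"]) auto

lemma pow_mat_Suc_left:
  assumes "A \<in> carrier_mat n n"
  shows "A ^\<^sub>m Suc k = A * A ^\<^sub>m k"
proof (induction k)
  case (Suc k)
  have "A ^\<^sub>m Suc (Suc k) = (A * A ^\<^sub>m k) * A" using Suc by simp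
  also have "\<dots> = A * (A ^\<^sub>m k * A)" using assms by (intro assoc_mult_mat) auto
  finally show ?case by simp
qed (use assms in simp)

lemma companion_carrier: "companion n a \<in> carrier_mat n n"
  unfolding companion_def by auto

lemma companion_index: "i < n \<Longrightarrow> j < n \<Longrightarrow> companion n a $$ (i, j) =
  (if i = 0 then - a (n - j) else if i = j + 1 then 1 else 0)"
  unfolding companion_def by auto

abbreviation top_row :: "nat \<Rightarrow> (nat \<Rightarrow> complex) \<Rightarrow> nat \<Rightarrow> nat \<Rightarrow> complex" where
  "top_row n a k j \<equiv> (companion n a ^\<^sub>m k) $$ (0, j)"

lemma companion_pow_Suc_row:
  assumes "0 < i" "i < n" "j < n"
  shows "(companion n a ^\<^sub>m Suc k) $$ (i, j) = (companion n a ^\<^sub>m k) $$ (i - 1, j)"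
proof -
  let ?C = "companion n a"
  have "(?C ^\<^sub>m Suc k) $$ (i, j) = (\<Sum>m<n. ?C $$ (i, m) * (?C ^\<^sub>m k) $$ (m, j))"
    using assms companion_carrier[of n a]
    unfolding pow_mat_Suc_left[OF companion_carrier] by (simp add: scalar_prod_def lessThan_atLeast0)
  also have "\<dots> = (\<Sum>m<n. if m = i - 1 then (?C ^\<^sub>m k) $$ (m, j) else 0)"
    using assms by (intro sum.cong) (auto simp: companion_index)
  finally show ?thesis using assms by simp
qed

lemma companion_pow_row_top:
  "i \<le> k \<Longrightarrow> i < n \<Longrightarrow> j < n \<Longrightarrow> (companion n a ^\<^sub>m k) $$ (i, j) = top_row n a (k - i) j"
proof (induction i arbitrary: k)
  case (Suc i)
  then obtain k' where "k = Suc k'" by (cases k) auto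
  with Suc show ?case using companion_pow_Suc_row[of "Suc i" n j a k'] by simp
qed simp

lemma companion_pow_row_unit:
  "k \<le> i \<Longrightarrow> i < n \<Longrightarrow> j < n \<Longrightarrow>
    (companion n a ^\<^sub>m k) $$ (i, j) = (if i - k = j then 1 else 0)"
proof (induction k arbitrary: i)
  case 0
  then show ?case using companion_carrier[of n a] by auto
next
  case (Suc k)
  then show ?case using companion_pow_Suc_row[of i n j a k] by simp
qed

lemma companion_pow_left_mult:
  assumes v: "\<And>i. n \<le> i \<Longrightarrow> v i = 0" and "j < n"
  shows "(\<Sum>i<n. (companion n a ^\<^sub>m k) $$ (i, j) * v i)
    = (\<Sum>i<k. v i * top_row n a (k - i) j) + v (j + k)"
proof -
  let ?C = "companion n a"
  have "(\<Sum>i<n. (?C ^\<^sub>m k) $$ (i, j) * v i) = (\<Sum>i<k + n. (?C ^\<^sub>m k) $$ (i, j) * v i)"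
    using v by (intro sum.mono_neutral_left) auto
  also have "\<dots> = (\<Sum>i<k. (?C ^\<^sub>m k) $$ (i, j) * v i)
      + (\<Sum>m<n. (?C ^\<^sub>m k) $$ (m + k, j) * v (m + k))"
    by (rule sum_lessThan_add_split)
  also have "(\<Sum>i<k. (?C ^\<^sub>m k) $$ (i, j) * v i) = (\<Sum>i<k. v i * top_row n a (k - i) j)"
  proof (intro sum.cong refl)
    fix i assume "i \<in> {..<k}"
    then show "(?C ^\<^sub>m k) $$ (i, j) * v i = v i * top_row n a (k - i) j"
      using v \<open>j < n\<close> companion_pow_row_top[of i k n j a] by (cases "i < n") auto
  qed
  also have "(\<Sum>m<n. (?C ^\<^sub>m k) $$ (m + k, j) * v (m + k)) = (\<Sum>m<n. if m = j then v (m + k) else 0)"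
  proof (intro sum.cong refl)
    fix m assume "m \<in> {..<n}"
    then show "(?C ^\<^sub>m k) $$ (m + k, j) * v (m + k) = (if m = j then v (m + k) else 0)"
      using v \<open>j < n\<close> companion_pow_row_unit[of k "m + k" n j a] by (cases "m + k < n") auto
  qed
  finally show ?thesis using \<open>j < n\<close> by simp
qed

lemma spectral_radius_left_eigenvector:
  assumes A: "A \<in> carrier_mat n n" and "0 < n"
  obtains l v where "cmod l = spectral_radius A" "\<And>i. n \<le> i \<Longrightarrow> v i = 0" "\<exists>i<n. v i \<noteq> 0"
    "\<And>k j. j < n \<Longrightarrow> (\<Sum>i<n. (A ^\<^sub>m k) $$ (i, j) * v i) = l ^ k * v j"
proof -
  obtain l where "l \<in> spectrum A" and r: "spectral_radius A = cmod l"
    using spectral_radius_mem_max(1)[OF A \<open>0 < n\<close>] by auto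
  then have "poly (char_poly (transpose_mat A)) l = 0"
    using A eigenvalue_root_char_poly[OF A] unfolding spectrum_def by auto
  then have "eigenvalue (transpose_mat A) l"
    using eigenvalue_root_char_poly[of "transpose_mat A" n] A by auto
  then obtain w where w: "w \<in> carrier_vec n" "w \<noteq> 0\<^sub>v n" and eq: "transpose_mat A *\<^sub>v w = l \<cdot>\<^sub>v w"
    using A unfolding eigenvalue_def eigenvector_def by auto
  define v where "v i = (if i < n then w $ i else 0)" for i
  have nz: "\<exists>i<n. v i \<noteq> 0"
  proof (rule ccontr)
    assume "\<not> ?thesis"
    then have "w = 0\<^sub>v n" using w(1) unfolding v_def by (intro eq_vecI) auto
    with w show False by auto
  qed
  have step: "(\<Sum>i<n. A $$ (i, j) * v i) = l * v j" if "j < n" for j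
  proof -
    have "(transpose_mat A *\<^sub>v w) $ j = (l \<cdot>\<^sub>v w) $ j" using eq by simp
    with that A w(1) show ?thesis unfolding v_def
      by (auto simp: scalar_prod_def lessThan_atLeast0 mult.commute intro!: sum.cong)
  qed
  have zero: "v i = 0" if "n \<le> i" for i using that by (simp add: v_def)
  have pow: "(\<Sum>i<n. (A ^\<^sub>m k) $$ (i, j) * v i) = l ^ k * v j" if "j < n" for k j
    using that
  proof (induction k arbitrary: j)
    case 0
    have "(\<Sum>i<n. (A ^\<^sub>m 0) $$ (i, j) * v i) = (\<Sum>i<n. if i = j then v i else 0)"
      using A 0 by (intro sum.cong) auto
    then show ?case using 0 by simp
  next
    case (Suc k)
    have "(\<Sum>i<n. (A ^\<^sub>m Suc k) $$ (i, j) * v i)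
        = (\<Sum>i<n. (\<Sum>m<n. (A ^\<^sub>m k) $$ (i, m) * A $$ (m, j)) * v i)"
      using Suc.prems A by (auto simp: scalar_prod_def lessThan_atLeast0 intro!: sum.cong)
    also have "\<dots> = (\<Sum>m<n. A $$ (m, j) * (\<Sum>i<n. (A ^\<^sub>m k) $$ (i, m) * v i))"
      unfolding sum_distrib_right sum_distrib_left by (subst sum.swap) (simp add: mult_ac)
    also have "\<dots> = l ^ k * (\<Sum>m<n. A $$ (m, j) * v m)"
      using Suc.IH by (simp add: sum_distrib_left mult_ac)
    finally show ?case using step[OF Suc.prems] by simp
  qed
  show thesis by (rule that[OF r[symmetric] zero nz pow])
qed

lemma top_row_coefficients:
  assumes "c < n"
  shows "a (n - c) = - companion n a $$ (0, c)" "bco n a (n - c) = top_row n a 2 c"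
    "cco n a (n - c) = top_row n a 3 c" "dco n a (n - c) = top_row n a 4 c"
  using assms companion_carrier[of n a]
  by (simp_all add: companion_index bco_def cco_def dco_def firstrow_def)

lemma delta_eq_gram_lambda_max: "delta n a = gram_lambda_max {..<n} (top_row n a 2) (top_row n a 1)"
proof -
  have "alpha n a = (\<Sum>c<n. (cmod (top_row n a 1 c))\<^sup>2)" "beta n a = (\<Sum>c<n. (cmod (top_row n a 2 c))\<^sup>2)"
    "gamma n a = (\<Sum>c<n. top_row n a 2 c * cnj (top_row n a 1 c))"
    unfolding alpha_def beta_def gamma_def sum_atLeastAtMost_reflect
    by (auto simp: top_row_coefficients(2-4) top_row_coefficients(1)[of _ n a] sum_negf[symmetric]
        intro!: sum.cong)
  then show ?thesis
    unfolding delta_def gram_lambda_max_def by (simp add: lambda_max2_def add.commute power2_commute)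
qed

lemma delta'_eq_gram_lambda_max: "delta' n a = gram_lambda_max {..<n - 2} (top_row n a 2) (top_row n a 1)"
proof -
  have "alpha' n a = (\<Sum>c<n - 2. (cmod (top_row n a 1 c))\<^sup>2)"
    "beta' n a = (\<Sum>c<n - 2. (cmod (top_row n a 2 c))\<^sup>2)"
    "gamma' n a = (\<Sum>c<n - 2. top_row n a 2 c * cnj (top_row n a 1 c))"
    unfolding alpha'_def beta'_def gamma'_def sum_atLeastAtMost_reflect
    by (auto simp: top_row_coefficients(2-4) top_row_coefficients(1)[of _ n a] sum_negf[symmetric]
        mult.commute intro!: sum.cong)
  then show ?thesis
    unfolding delta'_def gram_lambda_max_def by (simp add: lambda_max2_def add.commute power2_commute)
qed

lemma delta1_eq_gram_lambda_max: "delta1 n a = gram_lambda_max {..<n} (top_row n a 4) (top_row n a 3)"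
proof -
  have "alpha1 n a = (\<Sum>c<n. (cmod (top_row n a 4 c))\<^sup>2)" "beta1 n a = (\<Sum>c<n. (cmod (top_row n a 3 c))\<^sup>2)"
    "gamma1 n a = (\<Sum>c<n. top_row n a 4 c * cnj (top_row n a 3 c))"
    unfolding alpha1_def beta1_def gamma1_def sum_atLeastAtMost_reflect
    by (auto simp: top_row_coefficients(2-4) top_row_coefficients(1)[of _ n a] intro!: sum.cong)
  then show ?thesis unfolding delta1_def gram_lambda_max_def by (simp add: lambda_max2_def)
qed

lemma delta2_eq_gram_lambda_max:
  "delta2 n a = gram_lambda_max {..<2}
     (\<lambda>i. \<Sum>c<n. top_row n a 4 c * cnj (top_row n a (2 - i) c))
     (\<lambda>i. \<Sum>c<n. top_row n a 3 c * cnj (top_row n a (2 - i) c))"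
proof -
  have "gamma2 n a = (\<Sum>c<n. top_row n a 4 c * cnj (top_row n a 2 c))"
    "gamma3 n a = - (\<Sum>c<n. top_row n a 4 c * cnj (top_row n a 1 c))"
    "gamma4 n a = (\<Sum>c<n. top_row n a 3 c * cnj (top_row n a 2 c))"
    "gamma5 n a = - (\<Sum>c<n. top_row n a 3 c * cnj (top_row n a 1 c))"
    unfolding gamma2_def gamma3_def gamma4_def gamma5_def sum_atLeastAtMost_reflect
    by (auto simp: top_row_coefficients(2-4) top_row_coefficients(1)[of _ n a] sum_negf[symmetric]
        intro!: sum.cong)
  then show ?thesis
    unfolding delta2_def gram_lambda_max_def Let_def by (simp add: lambda_max2_def numeral_2_eq_2)
qed

lemma root4_le_of_pow_le:
  fixes x A B :: real
  assumes "0 \<le> x" "x ^ 4 \<le> A" "x ^ 8 \<le> B"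
  shows "x \<le> ((1/4) * A + (3/4) * sqrt B) powr (1/4)"
proof -
  have "x ^ 4 \<le> sqrt B" using assms(3) by (intro real_le_rsqrt) (simp flip: power_mult)
  then have "x ^ 4 \<le> (1/4) * A + (3/4) * sqrt B" using assms(2) by linarith
  then have "(x ^ 4) powr (1/4) \<le> ((1/4) * A + (3/4) * sqrt B) powr (1/4)"
    by (intro powr_mono2) simp_all
  moreover have "(x ^ 4) powr (1/4) = x"
    using root_powr_inverse[of 4 "x ^ 4"] real_root_power_cancel[of 4 x] assms(1) by simp
  ultimately show ?thesis by simp
qed

locale companion_left_eigenvector =
  fixes n :: nat and a :: "nat \<Rightarrow> complex" and l :: complex and v :: "nat \<Rightarrow> complex"
  assumes zero_beyond: "\<And>i. n \<le> i \<Longrightarrow> v i = 0"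
    and nonzero: "\<exists>i<n. v i \<noteq> 0"
    and eigen: "\<And>k j. j < n \<Longrightarrow> (\<Sum>i<n. (companion n a ^\<^sub>m k) $$ (i, j) * v i) = l ^ k * v j"
begin

lemma pow_eigenvalue_mult:
  assumes "j < n"
  shows "l ^ k * v j = (\<Sum>i<k. v i * top_row n a (k - i) j) + v (j + k)"
  using companion_pow_left_mult[OF zero_beyond assms, where a = a and k = k] eigen[OF assms, where k = k]
  by simp

lemma norm_split: "(\<Sum>i<n. (cmod (v i))\<^sup>2) = (\<Sum>i<k. (cmod (v i))\<^sup>2) + (\<Sum>j<n. (cmod (v (j + k)))\<^sup>2)"
proof -
  have "(\<Sum>i<n. (cmod (v i))\<^sup>2) = (\<Sum>i<k + n. (cmod (v i))\<^sup>2)"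
    using zero_beyond by (intro sum.mono_neutral_left) auto
  then show ?thesis by (simp add: sum_lessThan_add_split)
qed

lemma norm_pos: "0 < (\<Sum>i<n. (cmod (v i))\<^sup>2)"
proof -
  obtain i where "i < n" "v i \<noteq> 0" using nonzero by blast
  then have "0 < (cmod (v i))\<^sup>2" "(cmod (v i))\<^sup>2 \<le> (\<Sum>i<n. (cmod (v i))\<^sup>2)"
    by (auto intro: member_le_sum)
  then show ?thesis by linarith
qed

lemma sum_cmod_pow_eigenvalue_mult:
  "(\<Sum>j<n. (cmod (l ^ k * v j))\<^sup>2) = cmod l ^ (2 * k) * (\<Sum>i<n. (cmod (v i))\<^sup>2)"
  by (simp add: sum_distrib_left norm_mult norm_power power_mult_distrib power_mult mult.commute)

lemma sum_shift_truncate: "(\<And>j. f j 0 = 0) \<Longrightarrow> (\<Sum>j<n. f j (v (j + k))) = (\<Sum>j<n - k. f j (v (j + k)))"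
  by (rule sum.mono_neutral_right) (auto simp: zero_beyond)

lemma eigenvalue_pow4_le: "cmod l ^ 4 \<le> lambda_max2 (delta n a) 1 (sqrt (delta' n a))"
proof -
  define s where "s = (\<Sum>i<2. (cmod (v i))\<^sup>2)"
  define t where "t = (\<Sum>j<n. (cmod (v (j + 2)))\<^sup>2)"
  define P where "P j = v 0 * top_row n a 2 j + v 1 * top_row n a 1 j" for j
  have "0 \<le> s" "0 \<le> t" unfolding s_def t_def by (simp_all add: sum_nonneg)
  have "0 \<le> delta' n a" by (simp add: delta'_eq_gram_lambda_max gram_lambda_max_nonneg)
  have head: "(\<Sum>j\<in>S. (cmod (P j))\<^sup>2) \<le> gram_lambda_max S (top_row n a 2) (top_row n a 1) * s" for S
    unfolding P_def s_def using sum_cmod_lin_comb_sq_le by (simp add: numeral_2_eq_2)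
  \<comment> \<open>only the first \<open>n - 2\<close> entries of \<open>P\<close> meet the shifted tail of \<open>v\<close>, whence \<open>\<delta>'\<close>\<close>
  have "(\<Sum>j<n. P j * cnj (v (j + 2))) = (\<Sum>j<n - 2. P j * cnj (v (j + 2)))"
    using sum_shift_truncate[where f = "\<lambda>j w. P j * cnj w" and k = 2] by simp
  then have "Re (\<Sum>j<n. P j * cnj (v (j + 2))) \<le> cmod (\<Sum>j<n - 2. P j * cnj (v (j + 2)))"
    by (metis complex_Re_le_cmod)
  also have "\<dots> \<le> sqrt (\<Sum>j<n - 2. (cmod (P j))\<^sup>2) * sqrt t"
    using cmod_sum_mult_cnj_le[of P "\<lambda>j. v (j + 2)" "{..<n - 2}"]
      sum_shift_truncate[where f = "\<lambda>j w. (cmod w)\<^sup>2" and k = 2]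
    by (simp add: t_def)
  also have "\<dots> \<le> sqrt (delta' n a * s) * sqrt t"
    using head \<open>0 \<le> t\<close>
    by (intro mult_right_mono real_sqrt_le_mono) (auto simp: delta'_eq_gram_lambda_max)
  finally have cross: "Re (\<Sum>j<n. P j * cnj (v (j + 2))) \<le> sqrt (delta' n a) * sqrt s * sqrt t"
    by (simp add: real_sqrt_mult)
  have "l ^ 2 * v j = P j + v (j + 2)" if "j < n" for j
    using pow_eigenvalue_mult[OF that, of 2] by (simp add: P_def numeral_2_eq_2)
  then have "cmod l ^ 4 * (\<Sum>i<n. (cmod (v i))\<^sup>2) = (\<Sum>j<n. (cmod (P j + v (j + 2)))\<^sup>2)"
    using sum_cmod_pow_eigenvalue_mult[of 2] by simp
  also have "\<dots> \<le> lambda_max2 (delta n a) 1 (sqrt (delta' n a)) * (s + t)"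
    by (rule sum_cmod_add_sq_le_lambda_max2[OF _ _ cross])
      (use head[of "{..<n}"] \<open>0 \<le> s\<close> \<open>0 \<le> t\<close> \<open>0 \<le> delta' n a\<close>
        in \<open>simp_all add: delta_eq_gram_lambda_max t_def\<close>)
  finally show ?thesis using norm_pos norm_split[of 2] by (simp add: s_def t_def)
qed

lemma eigenvalue_pow8_le:
  "cmod l ^ 8 \<le> lambda_max2 (delta1 n a) (delta n a) (sqrt (delta2 n a)) + 1"
proof -
  define Y where "Y = lambda_max2 (delta1 n a) (delta n a) (sqrt (delta2 n a))"
  define s where "s = (\<Sum>i<4. (cmod (v i))\<^sup>2)"
  define t where "t = (\<Sum>j<n. (cmod (v (j + 4)))\<^sup>2)"
  define P where "P j = v 0 * top_row n a 4 j + v 1 * top_row n a 3 j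
    + (v 2 * top_row n a 2 j + v 3 * top_row n a 1 j)" for j
  have "0 \<le> s" "0 \<le> t" unfolding s_def t_def by (simp_all add: sum_nonneg)
  have "s = (\<Sum>i<2. (cmod (v i))\<^sup>2) + (\<Sum>i<2. (cmod (v (i + 2)))\<^sup>2)"
    using sum_lessThan_add_split[of _ 2 2] by (simp add: s_def)
  then have head: "(\<Sum>j<n. (cmod (P j))\<^sup>2) \<le> Y * s"
    using sum_cmod_block_lin_comb_sq_le[where S = "{..<n}" and x = "\<lambda>i. top_row n a (4 - i)"
        and y = "\<lambda>i. top_row n a (2 - i)" and u = v and w = "\<lambda>i. v (i + 2)"]
    unfolding P_def Y_def delta1_eq_gram_lambda_max delta_eq_gram_lambda_max delta2_eq_gram_lambda_max
    by (simp add: numeral_2_eq_2 numeral_3_eq_3)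
  have "0 \<le> delta n a" by (simp add: delta_eq_gram_lambda_max gram_lambda_max_nonneg)
  then have "0 \<le> Y"
    unfolding Y_def using lambda_max2_ge(2)[where r = "delta n a"] by (rule order_trans)
  have "Re (\<Sum>j<n. P j * cnj (v (j + 4))) \<le> sqrt (\<Sum>j<n. (cmod (P j))\<^sup>2) * sqrt t"
    unfolding t_def by (rule order_trans[OF complex_Re_le_cmod cmod_sum_mult_cnj_le])
  also have "\<dots> \<le> sqrt (Y * s) * sqrt t"
    using head \<open>0 \<le> t\<close> by (intro mult_right_mono real_sqrt_le_mono) simp_all
  finally have cross: "Re (\<Sum>j<n. P j * cnj (v (j + 4))) \<le> sqrt Y * sqrt s * sqrt t"
    by (simp add: real_sqrt_mult)
  have sum4: "(\<Sum>i<4. f i) = f 0 + f 1 + (f 2 + f 3)" for f :: "nat \<Rightarrow> complex"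
    by (simp add: eval_nat_numeral add_ac)
  have "l ^ 4 * v j = P j + v (j + 4)" if "j < n" for j
    using pow_eigenvalue_mult[OF that, of 4] by (simp only: sum4) (simp add: P_def)
  then have "cmod l ^ 8 * (\<Sum>i<n. (cmod (v i))\<^sup>2) = (\<Sum>j<n. (cmod (P j + v (j + 4)))\<^sup>2)"
    using sum_cmod_pow_eigenvalue_mult[of 4] by simp
  also have "\<dots> \<le> lambda_max2 Y 1 (sqrt Y) * (s + t)"
    by (rule sum_cmod_add_sq_le_lambda_max2[OF head _ cross])
      (use \<open>0 \<le> Y\<close> \<open>0 \<le> s\<close> \<open>0 \<le> t\<close> in \<open>simp_all add: t_def\<close>)
  also have "\<dots> = (Y + 1) * (\<Sum>i<n. (cmod (v i))\<^sup>2)"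
    using lambda_max2_sqrt[OF \<open>0 \<le> Y\<close>] norm_split[of 4] by (simp add: s_def t_def)
  finally show ?thesis using norm_pos unfolding Y_def by simp
qed

end

theorem mainTheorem12:
  fixes n :: nat and a :: "nat \<Rightarrow> complex"
  assumes "n \<ge> 2" and "a 1 \<noteq> 0"
  shows "spectral_radius (companion n a) \<le>
    ((1/4) * ((delta n a + 1 + sqrt ((delta n a - 1)\<^sup>2 + 4 * delta' n a)) / 2)
     + (3/4) * sqrt ((delta1 n a + delta n a
                      + sqrt ((delta1 n a - delta n a)\<^sup>2 + 4 * delta2 n a)) / 2 + 1))
    powr (1/4)"
proof -
  have "0 < n" using assms(1) by simp
  obtain l v where r: "cmod l = spectral_radius (companion n a)"
    and "companion_left_eigenvector n a l v"
  proof (rule spectral_radius_left_eigenvector[OF companion_carrier[of n a] \<open>0 < n\<close>])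
    fix l v
    assume "cmod l = spectral_radius (companion n a)" "\<And>i. n \<le> i \<Longrightarrow> v i = 0" "\<exists>i<n. v i \<noteq> 0"
      "\<And>k j. j < n \<Longrightarrow> (\<Sum>i<n. (companion n a ^\<^sub>m k) $$ (i, j) * v i) = l ^ k * v j"
    then show thesis by (intro that companion_left_eigenvector.intro)
  qed
  then interpret companion_left_eigenvector n a l v by simp
  have "(sqrt (delta' n a))\<^sup>2 = delta' n a" "(sqrt (delta2 n a))\<^sup>2 = delta2 n a"
    by (simp_all add: delta'_eq_gram_lambda_max delta2_eq_gram_lambda_max gram_lambda_max_nonneg)
  then show ?thesis
    using root4_le_of_pow_le[OF norm_ge_zero eigenvalue_pow4_le eigenvalue_pow8_le]
    by (simp only: lambda_max2_def r)
qed

end
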